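(* Let $n\ge 1$ and let $\mathcal{H}=(\mathbb{C}^3)^{\otimes n}$ with the sector projectors $\Pi_{\bm i}$ and trace-normalized projectors $\widetilde{\Pi}_{\bm i}$, $\bm i\in\{c,l\}^n$, as in the context. Define the twirling projector $\bar{\mathcal{P}}$ on linear operators $\rho$ on $\mathcal{H}$ by $\bar{\mathcal{P}}(\rho)=\sum_{\bm i\in\{c,l\}^n}\operatorname{tr}(\Pi_{\bm i}\rho)\,\widetilde{\Pi}_{\bm i}$. Then $$\bar{\mathcal{P}}=\frac{1}{|\mathbb{P}_n|}\sum_{P\in\mathbb{P}_n}\mathcal{P},$$ i.e. for every quantum state $\rho$ on $\mathcal{H}$, $\frac{1}{|\mathbb{P}_n|}\sum_{P\in\mathbb{P}_n}\mathcal{P}(\rho)=\sum_{\bm i}\operatorname{tr}(\Pi_{\bm i}\rho)\widetilde{\Pi}_{\bm i}$.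
   Context: A single qubit with leakage is the Hilbert space $\mathbb{C}^3$ with orthonormal basis $\{|0\rangle,|1\rangle,|2\rangle\}$; its computational subspace is $\operatorname{span}\{|0\rangle,|1\rangle\}$ with projector $\Pi_c=|0\rangle\langle 0|+|1\rangle\langle 1|$ and its leakage subspace is $\operatorname{span}\{|2\rangle\}$ with projector $\Pi_l=|2\rangle\langle 2|$. For $n$ qubits, $\mathcal{H}=(\mathbb{C}^3)^{\otimes n}$ and for $\bm i=(i_1,\dots,i_n)\in\{c,l\}^n$, $\Pi_{\bm i}=\bigotimes_{k=1}^n\Pi_{i_k}$ (the factor on qubit $k$ is $\Pi_c$ if $i_k=c$ and $\Pi_l$ if $i_k=l$), $\mathcal{H}_{\bm i}$ is its range, and $\widetilde{\Pi}_{\bm i}=\Pi_{\bm i}/\dim(\mathcal{H}_{\bm i})$. The single-qubit Pauli group is $\mathbb{P}=\{\pm1,\pm \mathrm{i}\}\times\{I,X,Y,Z\}$ (16 elements, $X,Y,Z$ the $2\times2$ Pauli matrices) and $\mathbb{P}_n=\mathbb{P}^{\times n}$. For $U\in\mathbb{P}$, its channel on $\mathbb{C}^3$ is $\mathcal{P}_U(\rho)=(U\oplus 1)\rho(U\oplus 1)^\dagger$, where $U\oplus 1$ acts as $U$ on $\operatorname{span}\{|0\rangle,|1\rangle\}$ and as the identity on $|2\rangle$. For $P=(P_1,\dots,P_n)\in\mathbb{P}_n$, $\mathcal{P}=\bigotimes_{k}\mathcal{P}_{P_k}$. *)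

theory Defs
  imports Complex_Main
begin

text \<open>Operators on the n-qutrit space (C^3)^{\<otimes>n} are represented by their matrices
in the computational product basis, indexed by lists xs of length n with entries in {0,1,2}.
A single-site operator is a function nat \<Rightarrow> nat \<Rightarrow> complex (3x3 matrix, indices 0,1,2).\<close>

type_synonym op1 = "nat \<Rightarrow> nat \<Rightarrow> complex"
type_synonym opn = "nat list \<Rightarrow> nat list \<Rightarrow> complex"

definition basis :: "nat \<Rightarrow> nat list set" where
  "basis n = {xs. length xs = n \<and> set xs \<subseteq> {0,1,2}}"

definition tensor :: "op1 list \<Rightarrow> opn" where
  "tensor As xs ys = (\<Prod>k<length As. (As ! k) (xs ! k) (ys ! k))"

definition mtrace :: "nat \<Rightarrow> opn \<Rightarrow> complex" where
  "mtrace n A = (\<Sum>x\<in>basis n. A x x)"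

definition mmult :: "nat \<Rightarrow> opn \<Rightarrow> opn \<Rightarrow> opn" where
  "mmult n A B x y = (\<Sum>z\<in>basis n. A x z * B z y)"

definition adjoint :: "opn \<Rightarrow> opn" where
  "adjoint A x y = cnj (A y x)"

datatype pauli = PI | PX | PY | PZ

fun pauli_mat :: "pauli \<Rightarrow> op1" where
  "pauli_mat PI i j = (if i = j then 1 else 0)"
| "pauli_mat PX i j = (if i \<noteq> j then 1 else 0)"
| "pauli_mat PY i j = (if i = 0 \<and> j = 1 then - \<i> else if i = 1 \<and> j = 0 then \<i> else 0)"
| "pauli_mat PZ i j = (if i = 0 \<and> j = 0 then 1 else if i = 1 \<and> j = 1 then -1 else 0)"

definition pauli_group :: "(complex \<times> pauli) set" where
  "pauli_group = {1, -1, \<i>, -\<i>} \<times> UNIV"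

definition pauli_group_n :: "nat \<Rightarrow> (complex \<times> pauli) list set" where
  "pauli_group_n n = {Ps. length Ps = n \<and> set Ps \<subseteq> pauli_group}"

definition lift :: "complex \<times> pauli \<Rightarrow> op1" where
  "lift U i j = (if i < 2 \<and> j < 2 then fst U * pauli_mat (snd U) i j
                 else if i = 2 \<and> j = 2 then 1 else 0)"

definition pauli_channel :: "nat \<Rightarrow> (complex \<times> pauli) list \<Rightarrow> opn \<Rightarrow> opn" where
  "pauli_channel n Ps \<rho> =
     (let W = tensor (map lift Ps) in mmult n (mmult n W \<rho>) (adjoint W))"

text \<open>Sector projectors; a sector label is a bool list, True = leakage (l), False = computational (c).\<close>
definition proj_c :: op1 where
  "proj_c i j = (if i = j \<and> i < 2 then 1 else 0)"

definition proj_l :: op1 where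
  "proj_l i j = (if i = 2 \<and> j = 2 then 1 else 0)"

definition sector_proj :: "bool list \<Rightarrow> opn" where
  "sector_proj s = tensor (map (\<lambda>b. if b then proj_l else proj_c) s)"

definition sectors :: "nat \<Rightarrow> bool list set" where
  "sectors n = {s. length s = n}"

definition sector_dim :: "nat \<Rightarrow> bool list \<Rightarrow> nat" where
  "sector_dim n s = card {x \<in> basis n. sector_proj s x x = 1}"

definition normalized_sector_proj :: "nat \<Rightarrow> bool list \<Rightarrow> opn" where
  "normalized_sector_proj n s x y = sector_proj s x y / of_nat (sector_dim n s)"

definition twirl_proj :: "nat \<Rightarrow> opn \<Rightarrow> opn" where
  "twirl_proj n \<rho> x y =
     (\<Sum>s\<in>sectors n. mtrace n (mmult n (sector_proj s) \<rho>) * normalized_sector_proj n s x y)"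

end

theory Submission
  imports Defs
begin

(* Everything is computed entrywise in the product basis, where the average over P_n factorises
   into single-site averages. For one site, lift (u, p) carries the global phase u exactly on the
   computational block, so the phase survives the average only through |u|^2 = 1, i.e. for entries
   whose row and column lie in the same block (computational or leaked); the blocks coupling
   span{|0>,|1>} with |2> average to zero. On the computational block the Pauli completeness
   relation turns the average into the depolarising map X |-> tr(X) I/2, and |2><2| is left
   untouched. The product of these single-site kernels is exactly the kernel of the
   sector-diagonal map rho |-> sum_s tr(Pi_s rho) Pi_s / dim H_s. *)

lemma sum_lists_length_prod:
  fixes f :: "nat \<Rightarrow> 'a \<Rightarrow> 'b::comm_semiring_1"
  assumes "finite A"
  shows "(\<Sum>xs\<in>{xs. length xs = n \<and> set xs \<subseteq> A}. \<Prod>k<n. f k (xs ! k)) = (\<Prod>k<n. \<Sum>a\<in>A. f k a)"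
proof (induction n arbitrary: f)
  case 0
  have "{xs. length xs = 0 \<and> set xs \<subseteq> A} = {[]}"
    by auto
  then show ?case
    by simp
next
  case (Suc n)
  let ?L = "{xs. length xs = n \<and> set xs \<subseteq> A}"
  have cons_image: "{xs. length xs = Suc n \<and> set xs \<subseteq> A} = (\<lambda>(a, xs). a # xs) ` (A \<times> ?L)"
    by (auto simp: length_Suc_conv image_iff)
  have inj: "inj_on (\<lambda>(a, xs). a # xs) (A \<times> ?L)"
    by (auto simp: inj_on_def)
  have "(\<Sum>xs\<in>{xs. length xs = Suc n \<and> set xs \<subseteq> A}. \<Prod>k<Suc n. f k (xs ! k))
      = (\<Sum>(a, xs)\<in>A \<times> ?L. f 0 a * (\<Prod>k<n. f (Suc k) (xs ! k)))"
    unfolding cons_image sum.reindex[OF inj]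
    by (simp only: prod.lessThan_Suc_shift) (simp add: case_prod_beta)
  also have "\<dots> = (\<Sum>a\<in>A. f 0 a) * (\<Prod>k<n. \<Sum>a\<in>A. f (Suc k) a)"
    by (simp add: sum.cartesian_product[symmetric] sum_distrib_left[symmetric]
        sum_distrib_right[symmetric] Suc.IH[of "\<lambda>k. f (Suc k)"])
  also have "\<dots> = (\<Prod>k<Suc n. \<Sum>a\<in>A. f k a)"
    by (rule prod.lessThan_Suc_shift[symmetric])
  finally show ?case .
qed

lemma prod_of_bool:
  assumes "finite A"
  shows "(\<Prod>i\<in>A. of_bool (P i) :: 'a::comm_semiring_1) = of_bool (\<forall>i\<in>A. P i)"
  using assms by (induction A rule: finite_induct) auto

lemma UNIV_pauli: "(UNIV :: pauli set) = {PI, PX, PY, PZ}"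
  using pauli.exhaust by auto

lemma sum_phase_orthogonality:
  "(\<Sum>u\<in>{1, -1, \<i>, -\<i>}. (if A then u else 1) * cnj (if B then u else 1)) = (if A = B then 4 else 0)"
  by (simp add: complex_eq_iff)

lemma pauli_completeness:
  assumes "a < 2" "b < 2" "c < 2" "d < 2"
  shows "(\<Sum>p\<in>UNIV. pauli_mat p a b * cnj (pauli_mat p c d)) = of_bool (a = c \<and> b = d) * 2"
  using assms by (auto simp: UNIV_pauli less_2_cases_iff)

lemma sum_pauli_group_lift:
  assumes "a \<le> 2" "b \<le> 2" "c \<le> 2" "d \<le> 2"
  shows "(\<Sum>P\<in>pauli_group. lift P a b * cnj (lift P c d))
    = of_bool (a = c \<and> b = d \<and> (a < 2 \<longleftrightarrow> b < 2)) * (if a < 2 then 8 else 16)"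
proof -
  let ?phase = "\<lambda>i j u. if i < 2 \<and> j < 2 then u else 1"
  let ?F = "\<lambda>p. lift (1, p) a b * cnj (lift (1, p) c d)"
  have "(\<Sum>P\<in>pauli_group. lift P a b * cnj (lift P c d))
      = (\<Sum>(u, p)\<in>{1, -1, \<i>, -\<i>} \<times> UNIV. ?phase a b u * cnj (?phase c d u) * ?F p)"
    unfolding pauli_group_def by (intro sum.cong refl) (auto simp: lift_def algebra_simps)
  also have "\<dots> = (\<Sum>p\<in>UNIV. \<Sum>u\<in>{1, -1, \<i>, -\<i>}. ?phase a b u * cnj (?phase c d u) * ?F p)"
    unfolding sum.cartesian_product[symmetric] by (rule sum.swap)
  also have "\<dots> = (\<Sum>p\<in>UNIV. (if (a < 2 \<and> b < 2) = (c < 2 \<and> d < 2) then 4 else 0) * ?F p)"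
    by (simp only: sum_distrib_right[symmetric] sum_phase_orthogonality)
  also have "\<dots> = of_bool (a = c \<and> b = d \<and> (a < 2 \<longleftrightarrow> b < 2)) * (if a < 2 then 8 else 16)"
  proof -
    consider "a < 2 \<and> b < 2" "c < 2 \<and> d < 2" | "\<not> (a < 2 \<and> b < 2)" "\<not> (c < 2 \<and> d < 2)"
      | "(a < 2 \<and> b < 2) \<noteq> (c < 2 \<and> d < 2)"
      by blast
    then show ?thesis
    proof cases
      case 1
      then have "?F p = pauli_mat p a b * cnj (pauli_mat p c d)" for p
        by (simp add: lift_def)
      then show ?thesis
        using 1 by (simp add: sum_distrib_left[symmetric] pauli_completeness)
    next
      case 2
      then have "?F p = of_bool (a = 2 \<and> b = 2 \<and> c = 2 \<and> d = 2)" for p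
        using assms by (auto simp: lift_def)
      moreover have "(a = 2 \<and> b = 2 \<and> c = 2 \<and> d = 2) = (a = c \<and> b = d \<and> (a < 2 \<longleftrightarrow> b < 2))"
        using 2 assms by auto
      ultimately show ?thesis
        using 2 by (simp add: UNIV_pauli)
    qed auto
  qed
  finally show ?thesis .
qed

lemma card_pauli_group_n: "card (pauli_group_n n) = 16 ^ n"
proof -
  have "finite pauli_group" "card pauli_group = 16"
    by (simp_all add: pauli_group_def UNIV_pauli card_cartesian_product complex_eq_iff)
  then show ?thesis
    using card_lists_length_eq[of pauli_group n] by (simp add: pauli_group_n_def conj_commute)
qed

lemma finite_basis: "finite (basis n)"
  using finite_lists_length_eq[of "{0, 1, 2 :: nat}" n] by (simp add: basis_def conj_commute)

lemma length_basis: "x \<in> basis n \<Longrightarrow> length x = n"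
  by (simp add: basis_def)

lemma nth_basis_le: "x \<in> basis n \<Longrightarrow> k < n \<Longrightarrow> x ! k \<le> 2"
  unfolding basis_def by (auto dest!: nth_mem)

lemma finite_sectors: "finite (sectors n)"
  using finite_lists_length_eq[of "UNIV :: bool set" n] by (simp add: sectors_def)

definition sector_of :: "nat list \<Rightarrow> bool list" where
  "sector_of x = map (\<lambda>a. 2 \<le> a) x"

lemma sector_of_in_sectors: "x \<in> basis n \<Longrightarrow> sector_of x \<in> sectors n"
  by (simp add: sectors_def sector_of_def length_basis)

lemma sector_of_eq_iff:
  assumes "x \<in> basis n" "z \<in> basis n"
  shows "sector_of z = sector_of x \<longleftrightarrow> (\<forall>k<n. z ! k < 2 \<longleftrightarrow> x ! k < 2)"
  using assms by (auto simp: sector_of_def list_eq_iff_nth_eq length_basis not_le)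

lemma site_proj_entry:
  assumes "a \<le> 2" "b \<le> 2"
  shows "(if l then proj_l else proj_c) a b = of_bool (a = b \<and> l = (2 \<le> a))"
  using assms by (auto simp: proj_l_def proj_c_def)

lemma sector_proj_entry:
  assumes "s \<in> sectors n" "x \<in> basis n" "y \<in> basis n"
  shows "sector_proj s x y = of_bool (x = y \<and> sector_of x = s)"
proof -
  have "length s = n"
    using assms(1) by (simp add: sectors_def)
  then have "sector_proj s x y = (\<Prod>k<n. (if s ! k then proj_l else proj_c) (x ! k) (y ! k))"
    by (simp add: sector_proj_def tensor_def)
  also have "\<dots> = (\<Prod>k<n. of_bool (x ! k = y ! k \<and> s ! k = (2 \<le> x ! k)))"
  proof (rule prod.cong[OF refl])
    fix k assume "k \<in> {..<n}"
    then have "x ! k \<le> 2" "y ! k \<le> 2"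
      using nth_basis_le[OF assms(2)] nth_basis_le[OF assms(3)] by simp_all
    then show "(if s ! k then proj_l else proj_c) (x ! k) (y ! k)
        = of_bool (x ! k = y ! k \<and> s ! k = (2 \<le> x ! k))"
      by (rule site_proj_entry)
  qed
  also have "\<dots> = of_bool (\<forall>k\<in>{..<n}. x ! k = y ! k \<and> s ! k = (2 \<le> x ! k))"
    by (rule prod_of_bool) simp
  also have "(\<forall>k\<in>{..<n}. x ! k = y ! k \<and> s ! k = (2 \<le> x ! k)) \<longleftrightarrow> x = y \<and> sector_of x = s"
    using \<open>length s = n\<close> length_basis[OF assms(2)] length_basis[OF assms(3)]
    by (auto simp: list_eq_iff_nth_eq sector_of_def)
  finally show ?thesis .
qed

lemma mtrace_sector_proj_mult:
  assumes "s \<in> sectors n"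
  shows "mtrace n (mmult n (sector_proj s) \<rho>) = (\<Sum>z\<in>basis n. of_bool (sector_of z = s) * \<rho> z z)"
  unfolding mtrace_def mmult_def
proof (rule sum.cong[OF refl])
  fix z assume z: "z \<in> basis n"
  have "sector_proj s z u * \<rho> u z = (if u = z then of_bool (sector_of z = s) * \<rho> z z else 0)"
    if "u \<in> basis n" for u
    using sector_proj_entry[OF assms z that] by auto
  then have "(\<Sum>u\<in>basis n. sector_proj s z u * \<rho> u z)
      = (\<Sum>u\<in>basis n. if u = z then of_bool (sector_of z = s) * \<rho> z z else 0)"
    by (rule sum.cong[OF refl])
  then show "(\<Sum>u\<in>basis n. sector_proj s z u * \<rho> u z) = of_bool (sector_of z = s) * \<rho> z z"
    using z finite_basis by simp
qed

lemma sector_dim_sector_of: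
  assumes "x \<in> basis n"
  shows "sector_dim n (sector_of x) = (\<Prod>k<n. if x ! k < 2 then 2 else 1)"
proof -
  have "{z \<in> basis n. sector_proj (sector_of x) z z = 1} = {z \<in> basis n. sector_of z = sector_of x}"
    using sector_proj_entry[OF sector_of_in_sectors[OF assms]] by auto
  then have "sector_dim n (sector_of x) = (\<Sum>z\<in>basis n. of_bool (sector_of z = sector_of x))"
    by (simp add: sector_dim_def finite_basis Int_def conj_commute)
  also have "\<dots> = (\<Sum>z\<in>basis n. \<Prod>k<n. of_bool (z ! k < 2 \<longleftrightarrow> x ! k < 2))"
    using assms by (intro sum.cong refl) (simp add: prod_of_bool sector_of_eq_iff Ball_def)
  also have "\<dots> = (\<Prod>k<n. \<Sum>a\<in>{0, 1, 2 :: nat}. of_bool (a < 2 \<longleftrightarrow> x ! k < 2))"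
    unfolding basis_def by (rule sum_lists_length_prod) simp
  also have "\<dots> = (\<Prod>k<n. if x ! k < 2 then 2 else 1)"
    by (rule prod.cong[OF refl]) simp
  finally show ?thesis .
qed

lemma pow16_div_sector_dim:
  assumes "x \<in> basis n"
  shows "16 ^ n / of_nat (sector_dim n (sector_of x)) = (\<Prod>k<n. if x ! k < 2 then 8 else 16 :: complex)"
proof -
  have dim: "of_nat (sector_dim n (sector_of x)) = (\<Prod>k<n. if x ! k < 2 then 2 else 1 :: complex)"
    unfolding sector_dim_sector_of[OF assms] of_nat_prod by (rule prod.cong) simp_all
  have "(\<Prod>k<n. if x ! k < 2 then 8 else 16) * (\<Prod>k<n. if x ! k < 2 then 2 else 1) = (16 ^ n :: complex)"
    unfolding prod.distrib[symmetric] by (simp add: prod.cong[of _ _ _ "\<lambda>_. 16"])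
  moreover have "(\<Prod>k<n. if x ! k < 2 then 2 else 1 :: complex) \<noteq> 0"
    by simp
  ultimately show ?thesis
    unfolding dim by (simp add: divide_eq_eq)
qed

lemma twirl_proj_entry:
  assumes "x \<in> basis n" "y \<in> basis n"
  shows "twirl_proj n \<rho> x y
    = of_bool (x = y) * mtrace n (mmult n (sector_proj (sector_of x)) \<rho>) / of_nat (sector_dim n (sector_of x))"
proof -
  let ?c = "\<lambda>s. of_bool (x = y) * mtrace n (mmult n (sector_proj s) \<rho>) / of_nat (sector_dim n s)"
  have "mtrace n (mmult n (sector_proj s) \<rho>) * normalized_sector_proj n s x y
      = (if s = sector_of x then ?c s else 0)" if "s \<in> sectors n" for s
    using sector_proj_entry[OF that assms] by (auto simp: normalized_sector_proj_def)
  then have "twirl_proj n \<rho> x y = (\<Sum>s\<in>sectors n. if s = sector_of x then ?c s else 0)"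
    unfolding twirl_proj_def by (rule sum.cong[OF refl])
  then show ?thesis
    using sector_of_in_sectors[OF assms(1)] finite_sectors by simp
qed

lemma pauli_channel_entry:
  assumes "length Ps = n"
  shows "pauli_channel n Ps \<rho> x y = (\<Sum>z\<in>basis n. \<Sum>w\<in>basis n.
    \<rho> z w * (\<Prod>k<n. lift (Ps ! k) (x ! k) (z ! k) * cnj (lift (Ps ! k) (y ! k) (w ! k))))"
proof -
  let ?W = "tensor (map lift Ps)"
  have W: "?W a b = (\<Prod>k<n. lift (Ps ! k) (a ! k) (b ! k))" for a b
    using assms by (simp add: tensor_def)
  have "pauli_channel n Ps \<rho> x y = (\<Sum>w\<in>basis n. \<Sum>z\<in>basis n. ?W x z * \<rho> z w * cnj (?W y w))"
    by (simp add: pauli_channel_def Let_def mmult_def adjoint_def sum_distrib_right)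
  also have "\<dots> = (\<Sum>z\<in>basis n. \<Sum>w\<in>basis n. \<rho> z w * (?W x z * cnj (?W y w)))"
    by (subst sum.swap) (simp add: mult_ac)
  finally show ?thesis
    by (simp add: W prod.distrib)
qed

lemma sum_pauli_group_n_lift:
  assumes "x \<in> basis n" "y \<in> basis n" "z \<in> basis n" "w \<in> basis n"
  shows "(\<Sum>Ps\<in>pauli_group_n n. \<Prod>k<n. lift (Ps ! k) (x ! k) (z ! k) * cnj (lift (Ps ! k) (y ! k) (w ! k)))
    = 16 ^ n * of_bool (x = y \<and> z = w \<and> sector_of z = sector_of x) / of_nat (sector_dim n (sector_of x))"
proof -
  have "finite pauli_group"
    by (simp add: pauli_group_def UNIV_pauli)
  then have "(\<Sum>Ps\<in>pauli_group_n n. \<Prod>k<n. lift (Ps ! k) (x ! k) (z ! k) * cnj (lift (Ps ! k) (y ! k) (w ! k)))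
      = (\<Prod>k<n. \<Sum>P\<in>pauli_group. lift P (x ! k) (z ! k) * cnj (lift P (y ! k) (w ! k)))"
    unfolding pauli_group_n_def by (rule sum_lists_length_prod)
  also have "\<dots> = (\<Prod>k<n. of_bool (x ! k = y ! k \<and> z ! k = w ! k \<and> (z ! k < 2 \<longleftrightarrow> x ! k < 2))
      * (if x ! k < 2 then 8 else 16))"
  proof (rule prod.cong[OF refl])
    fix k assume "k \<in> {..<n}"
    then have "x ! k \<le> 2" "z ! k \<le> 2" "y ! k \<le> 2" "w ! k \<le> 2"
      using assms nth_basis_le by blast+
    then show "(\<Sum>P\<in>pauli_group. lift P (x ! k) (z ! k) * cnj (lift P (y ! k) (w ! k)))
      = of_bool (x ! k = y ! k \<and> z ! k = w ! k \<and> (z ! k < 2 \<longleftrightarrow> x ! k < 2)) * (if x ! k < 2 then 8 else 16)"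
      by (auto simp: sum_pauli_group_lift)
  qed
  also have "\<dots> = of_bool (\<forall>k\<in>{..<n}. x ! k = y ! k \<and> z ! k = w ! k \<and> (z ! k < 2 \<longleftrightarrow> x ! k < 2))
      * (\<Prod>k<n. if x ! k < 2 then 8 else 16)"
    by (simp add: prod.distrib prod_of_bool)
  also have "(\<forall>k\<in>{..<n}. x ! k = y ! k \<and> z ! k = w ! k \<and> (z ! k < 2 \<longleftrightarrow> x ! k < 2))
      \<longleftrightarrow> x = y \<and> z = w \<and> sector_of z = sector_of x"
  proof -
    have "x = y \<longleftrightarrow> (\<forall>k<n. x ! k = y ! k)" "z = w \<longleftrightarrow> (\<forall>k<n. z ! k = w ! k)"
      using assms by (simp_all add: list_eq_iff_nth_eq length_basis)
    then show ?thesis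
      using sector_of_eq_iff[OF assms(1) assms(3)] by auto
  qed
  finally show ?thesis
    by (simp add: pow16_div_sector_dim[OF assms(1), symmetric])
qed

lemma pauli_average_entry:
  assumes "x \<in> basis n" "y \<in> basis n"
  shows "1 / of_nat (card (pauli_group_n n)) * (\<Sum>Ps\<in>pauli_group_n n. pauli_channel n Ps \<rho> x y)
    = of_bool (x = y) * mtrace n (mmult n (sector_proj (sector_of x)) \<rho>) / of_nat (sector_dim n (sector_of x))"
proof -
  let ?K = "\<lambda>Ps z w. \<Prod>k<n. lift (Ps ! k) (x ! k) (z ! k) * cnj (lift (Ps ! k) (y ! k) (w ! k))"
  define c where "c = 16 ^ n * of_bool (x = y) / (of_nat (sector_dim n (sector_of x)) :: complex)"
  have "(\<Sum>Ps\<in>pauli_group_n n. pauli_channel n Ps \<rho> x y)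
      = (\<Sum>Ps\<in>pauli_group_n n. \<Sum>z\<in>basis n. \<Sum>w\<in>basis n. \<rho> z w * ?K Ps z w)"
    by (rule sum.cong[OF refl]) (simp add: pauli_channel_entry pauli_group_n_def)
  also have "\<dots> = (\<Sum>z\<in>basis n. \<Sum>w\<in>basis n. \<rho> z w * (\<Sum>Ps\<in>pauli_group_n n. ?K Ps z w))"
    by (simp add: sum_distrib_left sum.swap[of _ "pauli_group_n n"])
  also have "\<dots> = (\<Sum>z\<in>basis n. \<Sum>w\<in>basis n.
      if w = z then c * (of_bool (sector_of z = sector_of x) * \<rho> z z) else 0)"
    using assms by (intro sum.cong refl) (auto simp: sum_pauli_group_n_lift c_def)
  also have "\<dots> = (\<Sum>z\<in>basis n. c * (of_bool (sector_of z = sector_of x) * \<rho> z z))"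
    by (intro sum.cong refl) (simp add: finite_basis)
  also have "\<dots> = c * (\<Sum>z\<in>basis n. of_bool (sector_of z = sector_of x) * \<rho> z z)"
    by (simp only: sum_distrib_left)
  finally show ?thesis
    using assms by (simp add: c_def card_pauli_group_n mtrace_sector_proj_mult sector_of_in_sectors)
qed

theorem lemma1:
  fixes n :: nat and \<rho> :: opn
  assumes "n \<ge> 1"
  shows "\<forall>x\<in>basis n. \<forall>y\<in>basis n.
           (1 / of_nat (card (pauli_group_n n))) *
             (\<Sum>Ps\<in>pauli_group_n n. pauli_channel n Ps \<rho> x y)
           = twirl_proj n \<rho> x y"
  \<comment> \<open>The identity holds for n = 0 as well.\<close>
  by (metis pauli_average_entry twirl_proj_entry)

end
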